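(* Let $X$ be as in the context. If $\liminf_{x\to\infty}H_1(x)>1$, then $X$ is transient.
   Context: Let $\mathbb S\subseteq\mathbb Z_{\ge0}$ be an infinite set and let $X$ be an irreducible continuous-time Markov chain on $\mathbb S$ whose generator acts on functions $f:\mathbb S\to\mathbb R$ by $\mathcal A f(x)=\sum_{\eta\in\mathbb Z}\lambda_\eta(x)\big(f(x+\eta)-f(x)\big)$, where $\lambda_\eta(x)$ is the rate of the jump $x\to x+\eta$ (and $\lambda_\eta(x)=0$ whenever $x+\eta\notin\mathbb S$). Standing assumption: (a) there is a finite set $\Gamma\subset\mathbb Z$ such that $\lambda_\eta\equiv0$ for $\eta\notin\Gamma$; (b) $0\le\lambda_\eta(x)<\infty$ for all $x,\eta$. Define $m(x)=\sum_{\eta}\eta\,\lambda_\eta(x)$, $v(x)=\frac12\sum_\eta\eta^2\lambda_\eta(x)$ (positive on $\mathbb S$), and for $x>1$, $H_1(x)=\dfrac{(\log x)(m(x)x-v(x))}{v(x)}$. *)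

theory Defs
  imports "HOL-Analysis.Analysis"
begin

text \<open>A chain on a state space S (a set of naturals) is given by its jump rates:
  lam \<eta> x is the rate of the jump x \<rightarrow> x + \<eta>.\<close>

definition target :: "nat \<Rightarrow> int \<Rightarrow> nat" where
  "target x \<eta> = nat (int x + \<eta>)"

definition jumps :: "(int \<Rightarrow> nat \<Rightarrow> real) \<Rightarrow> nat \<Rightarrow> int set" where
  "jumps lam x = {\<eta>. \<eta> \<noteq> 0 \<and> lam \<eta> x \<noteq> 0}"

definition qtot :: "(int \<Rightarrow> nat \<Rightarrow> real) \<Rightarrow> nat \<Rightarrow> real" where
  "qtot lam x = (\<Sum>\<eta>\<in>jumps lam x. lam \<eta> x)"

definition jprob :: "(int \<Rightarrow> nat \<Rightarrow> real) \<Rightarrow> nat \<Rightarrow> int \<Rightarrow> real" where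
  "jprob lam x \<eta> = lam \<eta> x / qtot lam x"

text \<open>first_hit lam x n y = probability that the jump chain started at y
  visits x for the first time at some time \<ge> 1 exactly at step n.\<close>
primrec first_hit :: "(int \<Rightarrow> nat \<Rightarrow> real) \<Rightarrow> nat \<Rightarrow> nat \<Rightarrow> nat \<Rightarrow> real" where
  "first_hit lam x 0 y = 0"
| "first_hit lam x (Suc n) y =
     (\<Sum>\<eta>\<in>jumps lam y. jprob lam y \<eta> *
        (if target y \<eta> = x then (if n = 0 then 1 else 0) else first_hit lam x n (target y \<eta>)))"

text \<open>Transience: every state is transient, i.e. the probability of ever
  returning to it (the supremum of the partial sums of first-return
  probabilities) is strictly below 1. (For an irreducible chain transience of
  one state is equivalent to transience of all.) Transience of a
  continuous-time chain is by definition transience of its jump chain.\<close>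
definition transient_chain :: "nat set \<Rightarrow> (int \<Rightarrow> nat \<Rightarrow> real) \<Rightarrow> bool" where
  "transient_chain S lam \<longleftrightarrow>
     (\<forall>x\<in>S. \<exists>\<epsilon>>0. \<forall>N. (\<Sum>n<N. first_hit lam x n x) \<le> 1 - \<epsilon>)"

definition jump_rel :: "nat set \<Rightarrow> (int \<Rightarrow> nat \<Rightarrow> real) \<Rightarrow> nat \<Rightarrow> nat \<Rightarrow> bool" where
  "jump_rel S lam x y \<longleftrightarrow> x \<in> S \<and> y \<in> S \<and> (\<exists>\<eta>. \<eta> \<noteq> 0 \<and> lam \<eta> x > 0 \<and> int y = int x + \<eta>)"

definition irreducible_chain :: "nat set \<Rightarrow> (int \<Rightarrow> nat \<Rightarrow> real) \<Rightarrow> bool" where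
  "irreducible_chain S lam \<longleftrightarrow> (\<forall>x\<in>S. \<forall>y\<in>S. (jump_rel S lam)\<^sup>*\<^sup>* x y)"

definition drift :: "int set \<Rightarrow> (int \<Rightarrow> nat \<Rightarrow> real) \<Rightarrow> nat \<Rightarrow> real" where
  "drift \<Gamma> lam x = (\<Sum>\<eta>\<in>\<Gamma>. real_of_int \<eta> * lam \<eta> x)"

definition vfun :: "int set \<Rightarrow> (int \<Rightarrow> nat \<Rightarrow> real) \<Rightarrow> nat \<Rightarrow> real" where
  "vfun \<Gamma> lam x = (1/2) * (\<Sum>\<eta>\<in>\<Gamma>. (real_of_int \<eta>)^2 * lam \<eta> x)"

definition H1 :: "int set \<Rightarrow> (int \<Rightarrow> nat \<Rightarrow> real) \<Rightarrow> nat \<Rightarrow> real" where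
  "H1 \<Gamma> lam x = ln (real x) * (drift \<Gamma> lam x * real x - vfun \<Gamma> lam x) / vfun \<Gamma> lam x"

end

theory Submission
  imports Defs "HOL-Real_Asymp.Real_Asymp"
begin

text \<open>
  A second order Taylor expansion shows that the generator applied to \<open>f t = 1 / ln (ln t)\<close>
  is, up to the positive factor \<open>1 / (t ln t ln (ln t))\<^sup>2\<close>, equal to
  \<open>v(t) (1 + o(1)) - ln t (t m(t) - v(t))\<close>, which is negative where \<open>H\<^sub>1(t) > c > 1\<close>.
  Hence for large \<open>x\<^sub>0\<close> the function equal to \<open>1\<close> on \<open>{..x\<^sub>0}\<close> and to \<open>f / f x\<^sub>0\<close> above
  is superharmonic for the jump chain, so from any \<open>y > x\<^sub>0\<close> a state \<open>x \<le> x\<^sub>0\<close> is hit with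
  probability at most \<open>f y / f x\<^sub>0 < 1\<close>. By irreducibility \<open>x\<close> reaches such a \<open>y\<close> along a
  path that does not revisit \<open>x\<close>, so the return probability to \<open>x\<close> is below \<open>1\<close> as well.
\<close>

section \<open>The Lyapunov function \<open>1 / ln (ln t)\<close>\<close>

definition inv_ln_ln :: "real \<Rightarrow> real" where
  "inv_ln_ln t = 1 / ln (ln t)"

lemma exp_one_less_imp:
  fixes t :: real
  assumes "exp 1 < t"
  shows "1 < t" "1 < ln t" "0 < ln (ln t)"
proof -
  show "1 < t" using assms by (rule less_trans[rotated]) simp
  then have "ln (exp 1) < ln t" using assms by (subst ln_less_cancel_iff) auto
  then show "1 < ln t" by simp
  then show "0 < ln (ln t)" by simp
qed

lemma inv_ln_ln_pos: "exp 1 < (t::real) \<Longrightarrow> 0 < inv_ln_ln t"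
  unfolding inv_ln_ln_def using exp_one_less_imp by simp

lemma inv_ln_ln_strict_antimono:
  fixes s t :: real
  assumes "exp 1 < s" "s < t"
  shows "inv_ln_ln t < inv_ln_ln s"
proof -
  have "ln (ln s) < ln (ln t)" using exp_one_less_imp[OF assms(1)] assms(2) by simp
  then show ?thesis unfolding inv_ln_ln_def using exp_one_less_imp[OF assms(1)] by (simp add: frac_less2)
qed

lemma inv_ln_ln_antimono:
  fixes s t :: real
  shows "exp 1 < s \<Longrightarrow> s \<le> t \<Longrightarrow> inv_ln_ln t \<le> inv_ln_ln s"
  using inv_ln_ln_strict_antimono[of s t] by (cases "s = t") simp_all

text \<open>Second order Taylor expansion: the coefficients of \<open>\<eta>\<close> and \<open>\<eta>\<^sup>2\<close> are
  the first derivative and half the second derivative of \<^const>\<open>inv_ln_ln\<close>.\<close>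
lemma inv_ln_ln_taylor:
  fixes \<eta> :: real
  shows
  "(\<lambda>y. inv_ln_ln (y + \<eta>) - inv_ln_ln y + \<eta> / (y * ln y * ln (ln y) ^ 2)
      - \<eta>\<^sup>2 * (ln y + 1 + 2 / ln (ln y)) / (2 * (y * ln y * ln (ln y))\<^sup>2))
    \<in> o(\<lambda>y. 1 / (y * ln y * ln (ln y))\<^sup>2)"
  unfolding inv_ln_ln_def power2_eq_square by real_asymp

lemma eventually_inv_ln_ln_increment_le:
  fixes \<Gamma> :: "real set" and \<delta> :: real
  assumes "finite \<Gamma>" "0 < \<delta>"
  shows "eventually (\<lambda>y. \<forall>\<eta>\<in>\<Gamma>. inv_ln_ln (y + \<eta>) - inv_ln_ln y
           \<le> (\<eta>\<^sup>2 * (ln y + 1 + 2 / ln (ln y) + 2 * \<delta>) / 2 - \<eta> * y * ln y) / (y * ln y * ln (ln y))\<^sup>2)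
           at_top"
proof (intro eventually_ball_finite ballI assms(1))
  fix \<eta> assume "\<eta> \<in> \<Gamma>"
  show "eventually (\<lambda>y. inv_ln_ln (y + \<eta>) - inv_ln_ln y
           \<le> (\<eta>\<^sup>2 * (ln y + 1 + 2 / ln (ln y) + 2 * \<delta>) / 2 - \<eta> * y * ln y) / (y * ln y * ln (ln y))\<^sup>2)
           at_top"
  proof (cases "\<eta> = 0")
    case False
    then have "0 < \<delta> * \<eta>\<^sup>2" using assms(2) by simp
    from landau_o.smallD[OF inv_ln_ln_taylor[of \<eta>] this] eventually_gt_at_top[of "exp 1"]
    show ?thesis
    proof eventually_elim
      case (elim y)
      define D where "D = (y * ln y * ln (ln y))\<^sup>2"
      have "0 < y" "0 < ln y" "0 < ln (ln y)"
        using exp_one_less_imp[OF elim(2)] by simp_all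
      then have "0 < D" "\<eta> / (y * ln y * ln (ln y) ^ 2) = \<eta> * y * ln y / D"
        unfolding D_def by (simp_all add: power2_eq_square)
      moreover have "(\<eta>\<^sup>2 * (ln y + 1 + 2 / ln (ln y) + 2 * \<delta>) / 2 - \<eta> * y * ln y) / D
          = \<eta>\<^sup>2 * (ln y + 1 + 2 / ln (ln y)) / (2 * D) + \<delta> * \<eta>\<^sup>2 * (1 / D) - \<eta> * y * ln y / D"
        using \<open>0 < D\<close> by (simp add: field_simps)
      ultimately show ?case
        using elim(1) unfolding D_def[symmetric] by (simp add: abs_le_iff)
    qed
  qed simp
qed

lemma generator_inv_ln_ln_nonpos:
  fixes \<Gamma> :: "int set" and y :: nat and c \<delta> :: real
  assumes "exp 1 < real y" "0 \<le> \<delta>" "1 + 2 / ln (ln (real y)) + 2 * \<delta> \<le> c"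
    and increment: "\<And>\<eta>. \<eta> \<in> \<Gamma> \<Longrightarrow> inv_ln_ln (real y + of_int \<eta>) - inv_ln_ln (real y)
          \<le> ((of_int \<eta>)\<^sup>2 * (ln (real y) + 1 + 2 / ln (ln (real y)) + 2 * \<delta>) / 2
              - of_int \<eta> * real y * ln (real y)) / (real y * ln (real y) * ln (ln (real y)))\<^sup>2"
    and nonneg: "\<And>\<eta>. \<eta> \<in> \<Gamma> \<Longrightarrow> 0 \<le> lam \<eta> y"
    and H: "c < H1 \<Gamma> lam y"
  shows "(\<Sum>\<eta>\<in>\<Gamma>. lam \<eta> y * (inv_ln_ln (real y + of_int \<eta>) - inv_ln_ln (real y))) \<le> 0"
proof -
  define t L M where "t = real y" and "L = ln t" and "M = ln L"
  define m v where "m = drift \<Gamma> lam y" and "v = vfun \<Gamma> lam y"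
  define A where "A = L + 1 + 2 / M + 2 * \<delta>"
  have "0 < M" using exp_one_less_imp(3)[OF assms(1)] by (simp add: t_def L_def M_def)
  then have "0 < 2 / M" by simp
  then have "0 < c" using assms(2,3) unfolding t_def L_def M_def by linarith
  have "0 \<le> v" unfolding v_def vfun_def using nonneg by (auto intro!: sum_nonneg)
  moreover have "v \<noteq> 0" using H \<open>0 < c\<close> by (auto simp: H1_def v_def)
  ultimately have "0 < v" by simp
  then have drift_large: "c * v < L * (m * t - v)"
    using H by (simp add: H1_def m_def v_def t_def L_def pos_less_divide_eq)
  have "(1 + 2 / M + 2 * \<delta>) * v \<le> c * v"
    using assms(3) \<open>0 < v\<close> by (intro mult_right_mono) (simp_all add: t_def L_def M_def)
  moreover have "v * A - m * t * L = (1 + 2 / M + 2 * \<delta>) * v - L * (m * t - v)"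
    unfolding A_def by (simp add: algebra_simps)
  ultimately have "v * A - m * t * L \<le> 0"
    using drift_large by linarith
  have "(\<Sum>\<eta>\<in>\<Gamma>. lam \<eta> y * (inv_ln_ln (t + of_int \<eta>) - inv_ln_ln t))
      \<le> (\<Sum>\<eta>\<in>\<Gamma>. lam \<eta> y * (((of_int \<eta>)\<^sup>2 * A / 2 - of_int \<eta> * t * L) / (t * L * M)\<^sup>2))"
    using increment nonneg unfolding A_def t_def L_def M_def by (intro sum_mono mult_left_mono) auto
  also have "\<dots> = (v * A - m * t * L) / (t * L * M)\<^sup>2"
    unfolding m_def v_def drift_def vfun_def
    by (simp add: sum_divide_distrib[symmetric] sum_distrib_left sum_distrib_right
        sum_subtractf algebra_simps)
  also have "\<dots> \<le> 0"
    using \<open>v * A - m * t * L \<le> 0\<close> by (simp add: divide_nonpos_nonneg)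
  finally show ?thesis unfolding t_def .
qed

lemma eventually_generator_inv_ln_ln_nonpos:
  fixes \<Gamma> :: "int set" and c :: real
  assumes "finite \<Gamma>" "1 < c"
  shows "eventually (\<lambda>y. \<forall>lam. (\<forall>\<eta>\<in>\<Gamma>. 0 \<le> lam \<eta> y) \<longrightarrow> c < H1 \<Gamma> lam y \<longrightarrow>
           (\<Sum>\<eta>\<in>\<Gamma>. lam \<eta> y * (inv_ln_ln (real y + of_int \<eta>) - inv_ln_ln (real y))) \<le> 0)
           sequentially"
proof -
  define \<delta> where "\<delta> = (c - 1) / 4"
  have "0 < \<delta>" using assms(2) by (simp add: \<delta>_def)
  have "filterlim (\<lambda>t::real. ln (ln t)) at_top at_top" by real_asymp
  then have "eventually (\<lambda>t. 4 / (c - 1) \<le> ln (ln t)) at_top"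
    by (simp add: filterlim_at_top)
  with eventually_gt_at_top[of "exp 1"]
  have "eventually (\<lambda>t. exp 1 < t \<and> 1 + 2 / ln (ln t) + 2 * \<delta> \<le> c) at_top"
  proof eventually_elim
    case (elim t)
    then show ?case
      using exp_one_less_imp(3)[of t] assms(2) unfolding \<delta>_def by (simp add: field_simps)
  qed
  with eventually_inv_ln_ln_increment_le[OF finite_imageI[OF assms(1)] \<open>0 < \<delta>\<close>]
  have "eventually (\<lambda>t. exp 1 < t \<and> 1 + 2 / ln (ln t) + 2 * \<delta> \<le> c \<and>
          (\<forall>\<eta>\<in>of_int ` \<Gamma>. inv_ln_ln (t + \<eta>) - inv_ln_ln t
           \<le> (\<eta>\<^sup>2 * (ln t + 1 + 2 / ln (ln t) + 2 * \<delta>) / 2 - \<eta> * t * ln t) / (t * ln t * ln (ln t))\<^sup>2))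
          at_top"
    by eventually_elim blast
  from eventually_compose_filterlim[OF this filterlim_real_sequentially]
  show ?thesis
    using generator_inv_ln_ln_nonpos[where \<delta> = \<delta> and c = c] \<open>0 < \<delta>\<close> by (elim eventually_mono) auto
qed

lemma exp_one_less_real: "3 \<le> n \<Longrightarrow> exp 1 < real n"
  using e_less_272 by linarith

definition hit_bound :: "nat \<Rightarrow> nat \<Rightarrow> real" where
  "hit_bound x0 z = (if z \<le> x0 then 1 else inv_ln_ln (real z) / inv_ln_ln (real x0))"

lemma hit_bound_nonneg:
  assumes "3 \<le> x0"
  shows "0 \<le> hit_bound x0 z"
proof (cases "z \<le> x0")
  case False
  then have "3 \<le> z" using assms by simp
  then show ?thesis
    using inv_ln_ln_pos[OF exp_one_less_real[OF assms]] inv_ln_ln_pos[OF exp_one_less_real[OF \<open>3 \<le> z\<close>]]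
    by (simp add: hit_bound_def)
qed (simp add: hit_bound_def)

lemma hit_bound_less_one:
  assumes "3 \<le> x0" "x0 < z"
  shows "hit_bound x0 z < 1"
  unfolding hit_bound_def
  using assms inv_ln_ln_strict_antimono[OF exp_one_less_real[OF assms(1)], of "real z"]
    inv_ln_ln_pos[OF exp_one_less_real[OF assms(1)]] by simp

lemma hit_bound_le_one: "3 \<le> x0 \<Longrightarrow> hit_bound x0 z \<le> 1"
  using hit_bound_less_one[of x0 z] by (cases "z \<le> x0") (simp_all add: hit_bound_def)

lemma hit_bound_le_ratio:
  assumes "3 \<le> x0" "exp 1 < real z"
  shows "hit_bound x0 z \<le> inv_ln_ln (real z) / inv_ln_ln (real x0)"
  using inv_ln_ln_antimono[OF assms(2), of "real x0"] inv_ln_ln_pos[OF exp_one_less_real[OF assms(1)]]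
  unfolding hit_bound_def by simp

section \<open>Superharmonic functions and hitting probabilities\<close>

definition superharmonic :: "nat set \<Rightarrow> (int \<Rightarrow> nat \<Rightarrow> real) \<Rightarrow> (nat \<Rightarrow> real) \<Rightarrow> bool" where
  "superharmonic S lam F \<longleftrightarrow>
     (\<forall>y\<in>S. (\<Sum>\<eta>\<in>jumps lam y. jprob lam y \<eta> * F (target y \<eta>)) \<le> F y)"

definition hit_prob_lt_one :: "(int \<Rightarrow> nat \<Rightarrow> real) \<Rightarrow> nat \<Rightarrow> nat \<Rightarrow> bool" where
  "hit_prob_lt_one lam x y \<longleftrightarrow> (\<exists>\<epsilon>>0. \<forall>N. (\<Sum>n<N. first_hit lam x n y) \<le> 1 - \<epsilon>)"

lemma transient_chain_iff_hit_prob_lt_one: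
  "transient_chain S lam \<longleftrightarrow> (\<forall>x\<in>S. hit_prob_lt_one lam x x)"
  unfolding transient_chain_def hit_prob_lt_one_def ..

lemma rtranclp_avoiding_start:
  assumes "R\<^sup>*\<^sup>* a b"
  shows "(\<lambda>u v. R u v \<and> v \<noteq> a)\<^sup>*\<^sup>* a b"
  using assms
proof (induction rule: rtranclp_induct)
  case (step z y)
  then show ?case by (cases "y = a") (auto intro: rtranclp.rtrancl_into_rtrancl)
qed simp

locale jump_chain =
  fixes S :: "nat set" and lam :: "int \<Rightarrow> nat \<Rightarrow> real" and \<Gamma> :: "int set"
  assumes finite_\<Gamma>: "finite \<Gamma>"
    and rate_outside: "\<And>\<eta> x. \<eta> \<notin> \<Gamma> \<Longrightarrow> lam \<eta> x = 0"
    and rate_nonneg: "\<And>\<eta> x. 0 \<le> lam \<eta> x"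
    and rate_stay_in: "\<And>\<eta> x. x \<in> S \<Longrightarrow> int x + \<eta> \<notin> int ` S \<Longrightarrow> lam \<eta> x = 0"
begin

lemma jumps_subset: "jumps lam y \<subseteq> \<Gamma>"
  using rate_outside unfolding jumps_def by blast

lemma finite_jumps: "finite (jumps lam y)"
  using finite_subset[OF jumps_subset finite_\<Gamma>] .

lemma rate_pos_if_jump: "\<eta> \<in> jumps lam y \<Longrightarrow> 0 < lam \<eta> y"
  using rate_nonneg[of \<eta> y] unfolding jumps_def by simp

lemma jump_target:
  assumes "y \<in> S" "\<eta> \<in> jumps lam y"
  shows "target y \<eta> \<in> S" "int (target y \<eta>) = int y + \<eta>"
proof -
  obtain z where "z \<in> S" "int y + \<eta> = int z"
    using rate_stay_in[OF assms(1), of \<eta>] rate_pos_if_jump[OF assms(2)] by force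
  then show "target y \<eta> \<in> S" "int (target y \<eta>) = int y + \<eta>"
    unfolding target_def by simp_all
qed

lemma rate_le_qtot: "\<eta> \<in> jumps lam y \<Longrightarrow> lam \<eta> y \<le> qtot lam y"
  unfolding qtot_def using finite_jumps rate_nonneg by (intro member_le_sum) auto

lemma jprob_nonneg: "0 \<le> jprob lam y \<eta>"
  unfolding jprob_def qtot_def using rate_nonneg by (simp add: sum_nonneg)

lemma sum_jprob_le_one: "(\<Sum>\<eta>\<in>jumps lam y. jprob lam y \<eta>) \<le> 1"
  unfolding jprob_def sum_divide_distrib[symmetric] qtot_def[symmetric]
  by (cases "qtot lam y = 0") simp_all

lemma sum_first_hit_Suc_le:
  "(\<Sum>n<Suc N. first_hit lam x n y)
     \<le> (\<Sum>\<eta>\<in>jumps lam y. jprob lam y \<eta> *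
          (if target y \<eta> = x then 1 else (\<Sum>n<N. first_hit lam x n (target y \<eta>))))"
proof -
  have "(\<Sum>n<Suc N. first_hit lam x n y) = (\<Sum>n<N. first_hit lam x (Suc n) y)"
    by (subst sum.lessThan_Suc_shift) simp
  also have "\<dots> = (\<Sum>\<eta>\<in>jumps lam y. jprob lam y \<eta> * (\<Sum>n<N.
        if target y \<eta> = x then (if n = 0 then 1 else 0) else first_hit lam x n (target y \<eta>)))"
    by (simp add: sum_distrib_left sum.swap[of _ "{..<N}"])
  also have "\<dots> \<le> (\<Sum>\<eta>\<in>jumps lam y. jprob lam y \<eta> *
        (if target y \<eta> = x then 1 else (\<Sum>n<N. first_hit lam x n (target y \<eta>))))"
  proof (intro sum_mono mult_left_mono jprob_nonneg)
    fix \<eta>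
    have "(\<Sum>n<N. if n = 0 then 1 else 0 :: real) \<le> 1"
      by (cases N) (simp_all add: sum.lessThan_Suc_shift)
    then show "(\<Sum>n<N. if target y \<eta> = x then (if n = 0 then 1 else 0)
                         else first_hit lam x n (target y \<eta>))
        \<le> (if target y \<eta> = x then 1 else (\<Sum>n<N. first_hit lam x n (target y \<eta>)))"
      by simp
  qed
  finally show ?thesis .
qed

lemma sum_first_hit_le_superharmonic:
  assumes "superharmonic S lam F" "\<And>z. z \<in> S \<Longrightarrow> 0 \<le> F z" "1 \<le> F x" "y \<in> S"
  shows "(\<Sum>n<N. first_hit lam x n y) \<le> F y"
  using assms(4)
proof (induction N arbitrary: y)
  case 0
  then show ?case using assms(2) by simp
next
  case (Suc N)
  have "(\<Sum>n<Suc N. first_hit lam x n y)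
      \<le> (\<Sum>\<eta>\<in>jumps lam y. jprob lam y \<eta> *
          (if target y \<eta> = x then 1 else (\<Sum>n<N. first_hit lam x n (target y \<eta>))))"
    by (rule sum_first_hit_Suc_le)
  also have "\<dots> \<le> (\<Sum>\<eta>\<in>jumps lam y. jprob lam y \<eta> * F (target y \<eta>))"
    using Suc assms(3) jump_target(1) by (intro sum_mono mult_left_mono jprob_nonneg) auto
  also have "\<dots> \<le> F y"
    using assms(1) Suc.prems unfolding superharmonic_def by blast
  finally show ?case .
qed

lemma superharmonic_one: "superharmonic S lam (\<lambda>_. 1)"
  unfolding superharmonic_def using sum_jprob_le_one by simp

lemma sum_first_hit_le_one: "y \<in> S \<Longrightarrow> (\<Sum>n<N. first_hit lam x n y) \<le> 1"
  using sum_first_hit_le_superharmonic[OF superharmonic_one] by simp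

lemma hit_prob_lt_one_if_jump_rel:
  assumes "jump_rel S lam a b" "b \<noteq> x" "hit_prob_lt_one lam x b"
  shows "hit_prob_lt_one lam x a"
proof -
  obtain \<eta> where "a \<in> S" "\<eta> \<noteq> 0" "0 < lam \<eta> a" "int b = int a + \<eta>"
    using assms(1) unfolding jump_rel_def by blast
  then have jump: "\<eta> \<in> jumps lam a" and target: "target a \<eta> = b"
    unfolding jumps_def target_def by auto
  define p where "p = jprob lam a \<eta>"
  have "0 < p"
    unfolding p_def jprob_def using \<open>0 < lam \<eta> a\<close> rate_le_qtot[OF jump] by simp
  obtain \<epsilon> where "0 < \<epsilon>" and \<epsilon>: "\<And>N. (\<Sum>n<N. first_hit lam x n b) \<le> 1 - \<epsilon>"
    using assms(3) unfolding hit_prob_lt_one_def by blast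
  have "(\<Sum>n<N. first_hit lam x n a) \<le> 1 - min (p * \<epsilon>) 1" for N
  proof (cases N)
    case (Suc M)
    let ?g = "\<lambda>e. if target a e = x then 1 else (\<Sum>n<M. first_hit lam x n (target a e))"
    have "?g e \<le> 1 - (if e = \<eta> then \<epsilon> else 0)" if "e \<in> jumps lam a" for e
      using \<epsilon> target assms(2) sum_first_hit_le_one jump_target(1)[OF \<open>a \<in> S\<close> that] by auto
    then have "(\<Sum>e\<in>jumps lam a. jprob lam a e * ?g e)
        \<le> (\<Sum>e\<in>jumps lam a. jprob lam a e * (1 - (if e = \<eta> then \<epsilon> else 0)))"
      by (intro sum_mono mult_left_mono jprob_nonneg)
    also have "\<dots> = (\<Sum>e\<in>jumps lam a. jprob lam a e) - p * \<epsilon>"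
      using jump finite_jumps
      by (simp add: right_diff_distrib sum_subtractf if_distrib[of "(*) _"] sum.delta p_def)
    also have "\<dots> \<le> 1 - min (p * \<epsilon>) 1"
      using sum_jprob_le_one[of a] min.cobounded1[of "p * \<epsilon>" 1] by linarith
    finally show ?thesis
      unfolding Suc by (rule order_trans[OF sum_first_hit_Suc_le])
  qed simp
  then show ?thesis
    unfolding hit_prob_lt_one_def using \<open>0 < p\<close> \<open>0 < \<epsilon>\<close> by (intro exI[of _ "min (p * \<epsilon>) 1"]) simp
qed

lemma hit_prob_lt_one_if_path:
  assumes "(\<lambda>u v. jump_rel S lam u v \<and> v \<noteq> x)\<^sup>*\<^sup>* a b" "hit_prob_lt_one lam x b"
  shows "hit_prob_lt_one lam x a"
  using assms by (induction rule: converse_rtranclp_induct) (auto intro: hit_prob_lt_one_if_jump_rel)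

lemma jprob_average_le:
  assumes "0 \<le> G y" "(\<Sum>\<eta>\<in>\<Gamma>. lam \<eta> y * (G (target y \<eta>) - G y)) \<le> 0"
  shows "(\<Sum>\<eta>\<in>jumps lam y. jprob lam y \<eta> * G (target y \<eta>)) \<le> G y"
proof (cases "qtot lam y = 0")
  case False
  then have "0 < qtot lam y"
    using rate_nonneg unfolding qtot_def by (metis less_eq_real_def sum_nonneg)
  have "(\<Sum>\<eta>\<in>jumps lam y. lam \<eta> y * (G (target y \<eta>) - G y))
      = (\<Sum>\<eta>\<in>\<Gamma>. lam \<eta> y * (G (target y \<eta>) - G y))"
    using finite_\<Gamma> jumps_subset by (intro sum.mono_neutral_left) (auto simp: jumps_def target_def)
  then have "(\<Sum>\<eta>\<in>jumps lam y. lam \<eta> y * G (target y \<eta>)) \<le> qtot lam y * G y"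
    using assms(2) unfolding qtot_def
    by (simp add: right_diff_distrib sum_subtractf sum_distrib_right)
  then show ?thesis
    using \<open>0 < qtot lam y\<close> unfolding jprob_def
    by (simp add: sum_divide_distrib[symmetric] pos_divide_le_eq mult.commute)
qed (simp add: jprob_def assms(1))

lemma superharmonic_hit_bound:
  assumes generator: "\<And>y. y \<in> S \<Longrightarrow> x0 < y \<Longrightarrow>
      (\<Sum>\<eta>\<in>\<Gamma>. lam \<eta> y * (inv_ln_ln (real y + of_int \<eta>) - inv_ln_ln (real y))) \<le> 0"
    and "3 \<le> x0" and landing: "\<And>\<eta>. \<eta> \<in> \<Gamma> \<Longrightarrow> 3 \<le> int x0 + \<eta>"
  shows "superharmonic S lam (hit_bound x0)"
  unfolding superharmonic_def
proof
  fix y assume "y \<in> S"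
  show "(\<Sum>\<eta>\<in>jumps lam y. jprob lam y \<eta> * hit_bound x0 (target y \<eta>)) \<le> hit_bound x0 y"
  proof (cases "x0 < y")
    case False
    have "(\<Sum>\<eta>\<in>jumps lam y. jprob lam y \<eta> * hit_bound x0 (target y \<eta>))
        \<le> (\<Sum>\<eta>\<in>jumps lam y. jprob lam y \<eta> * 1)"
      using hit_bound_le_one[OF \<open>3 \<le> x0\<close>] by (intro sum_mono mult_left_mono jprob_nonneg)
    also have "\<dots> \<le> 1" using sum_jprob_le_one by simp
    finally show ?thesis using False by (simp add: hit_bound_def)
  next
    case True
    define f0 where "f0 = inv_ln_ln (real x0)"
    have "0 < f0" unfolding f0_def using inv_ln_ln_pos exp_one_less_real \<open>3 \<le> x0\<close> by blast
    have "lam \<eta> y * (hit_bound x0 (target y \<eta>) - hit_bound x0 y)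
        \<le> lam \<eta> y * (inv_ln_ln (real y + of_int \<eta>) - inv_ln_ln (real y)) / f0" if "\<eta> \<in> \<Gamma>" for \<eta>
    proof (cases "\<eta> \<in> jumps lam y")
      case True
      have "real (target y \<eta>) = real y + of_int \<eta>"
        using jump_target(2)[OF \<open>y \<in> S\<close> True] by linarith
      moreover have "exp 1 < real y + of_int \<eta>"
        using landing[OF that] \<open>x0 < y\<close> e_less_272 by linarith
      ultimately have "hit_bound x0 (target y \<eta>) \<le> inv_ln_ln (real y + of_int \<eta>) / f0"
        using hit_bound_le_ratio[OF \<open>3 \<le> x0\<close>] unfolding f0_def by metis
      then show ?thesis
        using True rate_nonneg[of \<eta> y] \<open>x0 < y\<close>
        by (simp add: hit_bound_def f0_def mult_left_mono diff_divide_distrib flip: times_divide_eq_right)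
    qed (auto simp: jumps_def target_def)
    then have "(\<Sum>\<eta>\<in>\<Gamma>. lam \<eta> y * (hit_bound x0 (target y \<eta>) - hit_bound x0 y))
        \<le> (\<Sum>\<eta>\<in>\<Gamma>. lam \<eta> y * (inv_ln_ln (real y + of_int \<eta>) - inv_ln_ln (real y))) / f0"
      unfolding sum_divide_distrib by (rule sum_mono)
    also have "\<dots> \<le> 0"
      using generator[OF \<open>y \<in> S\<close> True] \<open>0 < f0\<close> by (simp add: divide_nonpos_pos)
    finally show ?thesis
      using jprob_average_le hit_bound_nonneg[OF \<open>3 \<le> x0\<close>] by blast
  qed
qed

lemma eventually_superharmonic_hit_bound:
  assumes "eventually (\<lambda>y. y \<in> S \<longrightarrow>
      (\<Sum>\<eta>\<in>\<Gamma>. lam \<eta> y * (inv_ln_ln (real y + of_int \<eta>) - inv_ln_ln (real y))) \<le> 0) sequentially"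
  shows "eventually (\<lambda>x0. 3 \<le> x0 \<and> superharmonic S lam (hit_bound x0)) sequentially"
proof -
  have "eventually (\<lambda>x0. \<forall>\<eta>\<in>\<Gamma>. 3 \<le> int x0 + \<eta>) sequentially"
  proof (intro eventually_ball_finite finite_\<Gamma> ballI)
    fix \<eta> :: int
    show "eventually (\<lambda>x0. 3 \<le> int x0 + \<eta>) sequentially"
      using eventually_ge_at_top[of "nat (3 - \<eta>)"] by eventually_elim linarith
  qed
  with eventually_all_ge_at_top[OF assms] eventually_ge_at_top[of 3]
  show ?thesis
    by eventually_elim (auto intro!: superharmonic_hit_bound)
qed

lemma hit_prob_lt_one_above:
  assumes "superharmonic S lam (hit_bound x0)" "3 \<le> x0" "x \<le> x0" "y \<in> S" "x0 < y"
  shows "hit_prob_lt_one lam x y"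
proof -
  have "(\<Sum>n<N. first_hit lam x n y) \<le> hit_bound x0 y" for N
    using sum_first_hit_le_superharmonic[OF assms(1)] hit_bound_nonneg[OF assms(2)] assms(3,4)
    by (simp add: hit_bound_def)
  then show ?thesis
    unfolding hit_prob_lt_one_def using hit_bound_less_one[OF assms(2,5)]
    by (intro exI[of _ "1 - hit_bound x0 y"]) auto
qed

lemma transient_if_eventually_superharmonic_hit_bound:
  assumes "infinite S" "irreducible_chain S lam"
    and "eventually (\<lambda>x0. 3 \<le> x0 \<and> superharmonic S lam (hit_bound x0)) sequentially"
  shows "transient_chain S lam"
  unfolding transient_chain_iff_hit_prob_lt_one
proof
  fix x assume "x \<in> S"
  obtain x0 where "x \<le> x0" "3 \<le> x0" "superharmonic S lam (hit_bound x0)"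
    using eventually_conj[OF assms(3) eventually_ge_at_top[of x]]
    unfolding eventually_sequentially by auto
  obtain y where "y \<in> S" "x0 < y"
    using assms(1) by (meson infinite_nat_iff_unbounded)
  then have "hit_prob_lt_one lam x y"
    using hit_prob_lt_one_above \<open>x \<le> x0\<close> \<open>3 \<le> x0\<close> \<open>superharmonic S lam (hit_bound x0)\<close> by blast
  have "(jump_rel S lam)\<^sup>*\<^sup>* x y"
    using assms(2) \<open>x \<in> S\<close> \<open>y \<in> S\<close> unfolding irreducible_chain_def by blast
  then have "(\<lambda>u v. jump_rel S lam u v \<and> v \<noteq> x)\<^sup>*\<^sup>* x y"
    by (rule rtranclp_avoiding_start)
  then show "hit_prob_lt_one lam x x"
    using \<open>hit_prob_lt_one lam x y\<close> by (rule hit_prob_lt_one_if_path)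
qed

end

theorem mainTheorem9:
  fixes S :: "nat set" and lam :: "int \<Rightarrow> nat \<Rightarrow> real" and \<Gamma> :: "int set"
  assumes S_inf: "infinite S"
    and irred: "irreducible_chain S lam"
    and \<Gamma>_fin: "finite \<Gamma>"
    and outside: "\<And>\<eta> x. \<eta> \<notin> \<Gamma> \<Longrightarrow> lam \<eta> x = 0"
    and nonneg: "\<And>\<eta> x. 0 \<le> lam \<eta> x"
    and stay_in: "\<And>\<eta> x. x \<in> S \<Longrightarrow> int x + \<eta> \<notin> int ` S \<Longrightarrow> lam \<eta> x = 0"
    and liminf: "Liminf (inf at_top (principal S)) (\<lambda>x. ereal (H1 \<Gamma> lam x)) > 1"
  shows "transient_chain S lam"
proof -
  interpret jump_chain S lam \<Gamma>
    using \<Gamma>_fin outside nonneg stay_in by unfold_locales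
  obtain c where "1 < c" "ereal c < Liminf (inf at_top (principal S)) (\<lambda>x. ereal (H1 \<Gamma> lam x))"
    using ereal_dense2[OF liminf] by (auto simp: one_ereal_def)
  then have "eventually (\<lambda>y. y \<in> S \<longrightarrow> c < H1 \<Gamma> lam y) sequentially"
    by (auto dest: less_LiminfD simp: eventually_inf_principal)
  with eventually_generator_inv_ln_ln_nonpos[OF \<Gamma>_fin \<open>1 < c\<close>]
  have "eventually (\<lambda>y. y \<in> S \<longrightarrow>
      (\<Sum>\<eta>\<in>\<Gamma>. lam \<eta> y * (inv_ln_ln (real y + of_int \<eta>) - inv_ln_ln (real y))) \<le> 0) sequentially"
    by eventually_elim (simp add: nonneg)
  then have "eventually (\<lambda>x0. 3 \<le> x0 \<and> superharmonic S lam (hit_bound x0)) sequentially"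
    by (rule eventually_superharmonic_hit_bound)
  with S_inf irred show ?thesis
    by (rule transient_if_eventually_superharmonic_hit_bound)
qed

end
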